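(* Under Assumptions A1–A3 (see context), with $\tilde{\bar\theta}_k=\theta-\bar\theta_k$, for every $k\ge0$: $$|\bar\psi_k|\ge\bar\beta_k|\phi_k^{\mathrm T}\tilde{\bar\theta}_k|\quad\text{and}\quad \phi_k^{\mathrm T}\tilde{\bar\theta}_k\,\bar\psi_k\ge0,$$ where $$\bar\psi_k=\mathbb E_k\{\operatorname{sgn}[y_{k+1}-S_k(\phi_k^{\mathrm T}\bar\theta_k)]\}+F_{k+1}(u_k-\phi_k^{\mathrm T}\bar\theta_k)\mathrm I_{[S_k(\phi_k^{\mathrm T}\bar\theta_k)=U_k]}-[1-F_{k+1}(l_k-\phi_k^{\mathrm T}\bar\theta_k)]\mathrm I_{[S_k(\phi_k^{\mathrm T}\bar\theta_k)=L_k]}.$$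
   Context: Setting. Let $\{\mathcal F_k\}_{k\ge0}$ be a nondecreasing sequence of $\sigma$-algebras and write $\mathbb E_k[\cdot]=\mathbb E[\cdot\mid\mathcal F_k]$. Observations follow the saturated model $y_{k+1}=S_k(\phi_k^{\mathrm T}\theta+\varepsilon_{k+1})$, $k=0,1,2,\dots$, where $\phi_k\in\mathbb R^d$ is $\mathcal F_k$-measurable, $\theta\in\mathbb R^d$ is unknown, $\varepsilon_{k+1}\in\mathbb R$ is noise ($\mathcal F_{k+1}$-measurable), and $S_k(x)=L_k$ if $x<l_k$, $S_k(x)=x$ if $l_k\le x\le u_k$, $S_k(x)=U_k$ if $x>u_k$. Assumption A1: $\{\phi_k\}$ is bounded in $k$, and $\theta$ is an interior point of a known convex compact set $D\subseteq\mathbb R^d$. Let $\{C_k\}$ be a bounded $\mathcal F_k$-adapted sequence with $\sup_{x\in D}|\phi_k^{\mathrm T}x|\le C_k$. Assumption A2: $l_k,u_k,L_k,U_k$ are known $\mathcal F_k$-measurable random variables with $L_k\le l_k\le u_k\le U_k$ a.s.; there is a constant $M$ with $\sup_{k\ge0}\max\{l_k,-u_k\}\le M<\infty$ a.s.; and $L_k=l_k=u_k=U_k$ does not hold a.s. The weights $b_k$ are known, $\mathcal F_k$-measurable, with $0<\inf_k b_k\le\sup_k b_k\le 1$. Assumption A3: the conditional distribution function $F_{k+1}$ of $\varepsilon_{k+1}$ given $\mathcal F_k$ satisfies $F_{k+1}(0)=1/2$; its conditional density $f_{k+1}$ is continuous and known; and there is a constant $C\ge\sup_k C_k$ with $0<\inf_{|x|\le\max\{2C,C+M\},k\ge0}f_{k+1}(x)\le\sup_{|x|\le\max\{2C,C+M\},k\ge0}f_{k+1}(x)<\infty$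 a.s. Projection: for positive definite $Q$, $\|x\|_Q^2=x^{\mathrm T}Qx$ and $\Pi_Q(x)=\arg\min_{y\in D}\|x-y\|_Q$. TSWLAD algorithm. Step 1: with $\bar\theta_0\in D$, $\bar P_0>0$, and an $\mathcal F_k$-adapted sequence $\bar\mu_k$ with $0<\inf\bar\mu_k\le\sup\bar\mu_k<\infty$, for $k\ge0$: $\bar\theta_{k+1}=\Pi_{\bar P_{k+1}^{-1}}\{\bar\theta_k+\bar a_k b_k\bar P_k\phi_k\bar v_{k+1}\}$, $\bar v_{k+1}=\operatorname{sgn}[y_{k+1}-S_k(\phi_k^{\mathrm T}\bar\theta_k)]+F_{k+1}(u_k-\phi_k^{\mathrm T}\bar\theta_k)\mathrm I_{[S_k(\phi_k^{\mathrm T}\bar\theta_k)=U_k]}-[1-F_{k+1}(l_k-\phi_k^{\mathrm T}\bar\theta_k)]\mathrm I_{[S_k(\phi_k^{\mathrm T}\bar\theta_k)=L_k]}$, $\bar P_{k+1}=\bar P_k-\bar a_k\bar\beta_k b_k^2\bar P_k\phi_k\phi_k^{\mathrm T}\bar P_k$, $\bar a_k=1/(\bar\mu_k+\bar\beta_k b_k^2\phi_k^{\mathrm T}\bar P_k\phi_k)$, $\bar\beta_k=\inf_{|x|\le\max\{2C_k,C_k+l_k,C_k-u_k\}}f_{k+1}(x)$. Step 2: with $\theta_0\in D$, $P_0>0$, and $\mu_k$ with $0<\inf\mu_k\le\sup\mu_k<\infty$, for $k\ge0$, letting $d_k=\phi_k^{\mathrm T}(\bar\theta_k-\theta_k)$: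 $\theta_{k+1}=\Pi_{P_{k+1}^{-1}}\{\theta_k+a_kb_kP_k\phi_kv_{k+1}\}$, $v_{k+1}=\operatorname{sgn}[y_{k+1}-S_k(\phi_k^{\mathrm T}\theta_k)]+F_{k+1}(u_k-\phi_k^{\mathrm T}\theta_k)\mathrm I_{[S_k(\phi_k^{\mathrm T}\theta_k)=U_k]}-[1-F_{k+1}(l_k-\phi_k^{\mathrm T}\theta_k)]\mathrm I_{[S_k(\phi_k^{\mathrm T}\theta_k)=L_k]}$, $P_{k+1}=P_k-a_k\beta_kb_k^2P_k\phi_k\phi_k^{\mathrm T}P_k$, $a_k=1/(\mu_k+\beta_kb_k^2\phi_k^{\mathrm T}P_k\phi_k)$, and $\beta_k=\frac{F_{k+1}(l_k-\phi_k^{\mathrm T}\theta_k)-F_{k+1}(l_k-\phi_k^{\mathrm T}\bar\theta_k)}{d_k}\mathrm I_{[d_k\ne0]}+f_{k+1}(l_k-\phi_k^{\mathrm T}\theta_k)\mathrm I_{[d_k=0]}$ if $S_k(\phi_k^{\mathrm T}\theta_k)=L_k$; $\beta_k=\frac{1-2F_{k+1}(\phi_k^{\mathrm T}\theta_k-\phi_k^{\mathrm T}\bar\theta_k)}{d_k}\mathrm I_{[d_k\ne0]}+2f_{k+1}(0)\mathrm I_{[d_k=0]}$ if $L_k<S_k(\phi_k^{\mathrm T}\theta_k)<U_k$; $\beta_k=\frac{F_{k+1}(u_k-\phi_k^{\mathrm T}\theta_k)-F_{k+1}(u_k-\phi_k^{\mathrm T}\bar\theta_k)}{d_k}\mathrm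 I_{[d_k\ne0]}+f_{k+1}(u_k-\phi_k^{\mathrm T}\theta_k)\mathrm I_{[d_k=0]}$ if $S_k(\phi_k^{\mathrm T}\theta_k)=U_k$. Here $\operatorname{sgn}$ is the sign function and $\mathrm I_{[\cdot]}$ the indicator. *)

theory Defs
  imports "HOL-Analysis.Analysis" "HOL-Probability.Probability"
begin

definition Sat :: "real \<Rightarrow> real \<Rightarrow> real \<Rightarrow> real \<Rightarrow> real \<Rightarrow> real" where
  "Sat Lo lo up Up x = (if x < lo then Lo else if x \<le> up then x else Up)"

definition Ind :: "bool \<Rightarrow> real" where
  "Ind P = (if P then 1 else 0)"

definition pos_def :: "real^'n^'n \<Rightarrow> bool" where
  "pos_def Q \<longleftrightarrow> transpose Q = Q \<and> (\<forall>x. x \<noteq> 0 \<longrightarrow> x \<bullet> (Q *v x) > 0)"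

definition qnorm :: "real^'n^'n \<Rightarrow> real^'n \<Rightarrow> real" where
  "qnorm Q x = sqrt (x \<bullet> (Q *v x))"

definition proj :: "(real^'n) set \<Rightarrow> real^'n^'n \<Rightarrow> real^'n \<Rightarrow> real^'n" where
  "proj D Q x = (SOME y. y \<in> D \<and> (\<forall>z\<in>D. qnorm Q (x - y) \<le> qnorm Q (x - z)))"

definition outer :: "real^'n \<Rightarrow> real^'n \<Rightarrow> real^'n^'n" where
  "outer x y = (\<chi> i j. x $ i * y $ j)"

definition betabar :: "(real \<Rightarrow> real) \<Rightarrow> real \<Rightarrow> real \<Rightarrow> real \<Rightarrow> real" where
  "betabar f Ck lk uk = Inf (f ` {x. \<bar>x\<bar> \<le> max (2 * Ck) (max (Ck + lk) (Ck - uk))})"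

end

theory Submission
  imports Defs
begin

(*
  Conditionally on F_k the noise has the continuous distribution function F = F_{k+1}, so
  E_k sgn[y_{k+1} - S_k(a)] with a = phi_k^T thetabar_k and x = phi_k^T theta has a closed form
  (sgn_Sat_mean): -F(u_k - x), 1 - F(l_k - x) or 1 - 2F(a - x), according as S_k(a) is U_k, L_k
  or unsaturated.  It is obtained by sandwiching the sign between combinations of the indicators
  [eps <= t] and [eps < t], whose conditional expectations both equal F(t) for every
  F_k-measurable t: for constant t this is the definition of F, finitely-valued t follow by
  splitting into level sets, and general t by dyadic approximation and dominated convergence.
  With this closed form psibar_k becomes c (F p - F q) with c in {1, 2}, p - q = phi_k^T
  (theta - thetabar_k) and p, q in the window |z| <= max{2C_k, C_k + l_k, C_k - u_k}, on which
  f >= betabar_k; the mean value theorem then gives both inequalities.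
*)

lemma mono_has_real_derivative_nonneg:
  fixes F :: "real \<Rightarrow> real"
  assumes "mono F" "(F has_real_derivative d) (at x)"
  shows "0 \<le> d"
proof (rule ccontr)
  assume "\<not> 0 \<le> d"
  then obtain h where "h > 0" "\<forall>h'>0. h' < h \<longrightarrow> F (x + h') < F x"
    using DERIV_neg_dec_right[OF assms(2)] by force
  then have "F (x + h/2) < F x" by auto
  moreover have "F x \<le> F (x + h/2)" using assms(1) \<open>h > 0\<close> by (simp add: monoD)
  ultimately show False by simp
qed

lemma MVT_between:
  fixes F f :: "real \<Rightarrow> real"
  assumes "\<And>z. (F has_real_derivative f z) (at z)"
  obtains z where "min p q \<le> z" "z \<le> max p q" "F p - F q = f z * (p - q)"
proof (cases p q rule: linorder_cases)
  case less
  from MVT2[OF less, of F f] assms obtain z where "p < z" "z < q" "F q - F p = (q - p) * f z"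
    by blast
  moreover have "F p - F q = f z * (p - q)" using \<open>F q - F p = (q - p) * f z\<close> by argo
  ultimately show ?thesis using less by (intro that[of z]) auto
next
  case greater
  from MVT2[OF greater, of F f] assms obtain z where "q < z" "z < p" "F p - F q = (p - q) * f z"
    by blast
  then show ?thesis using greater by (intro that[of z]) (auto simp: mult.commute)
qed (use that in auto)

lemma mono_increment_bounds:
  fixes F f :: "real \<Rightarrow> real"
  assumes deriv: "\<And>z. (F has_real_derivative f z) (at z)" and "mono F"
    and lower: "\<And>z. min p q \<le> z \<Longrightarrow> z \<le> max p q \<Longrightarrow> \<beta> \<le> f z"
  shows "\<beta> * \<bar>p - q\<bar> \<le> \<bar>F p - F q\<bar>" and "0 \<le> (p - q) * (F p - F q)"
proof -
  obtain z where z: "min p q \<le> z" "z \<le> max p q" "F p - F q = f z * (p - q)"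
    using MVT_between[OF deriv] by blast
  have "0 \<le> f z" using mono_has_real_derivative_nonneg[OF \<open>mono F\<close> deriv] .
  moreover have "\<beta> * \<bar>p - q\<bar> \<le> f z * \<bar>p - q\<bar>" using lower[OF z(1,2)] by (simp add: mult_right_mono)
  ultimately show "\<beta> * \<bar>p - q\<bar> \<le> \<bar>F p - F q\<bar>"
    using z(3) by (simp add: abs_mult)
  show "0 \<le> (p - q) * (F p - F q)"
    using z(3) \<open>0 \<le> f z\<close> by (simp add: mult.left_commute)
qed

lemma betabar_le:
  assumes "\<And>z. 0 \<le> f z" "\<bar>z\<bar> \<le> max (2 * C) (max (C + l) (C - u))"
  shows "betabar f C l u \<le> f z"
  unfolding betabar_def
  by (rule cInf_lower) (use assms in \<open>auto intro: bdd_belowI2[where m=0]\<close>)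

lemma distribution_function_bounds:
  fixes F :: "real \<Rightarrow> real"
  assumes "mono F" "(F \<longlongrightarrow> 0) at_bot" "(F \<longlongrightarrow> 1) at_top"
  shows "0 \<le> F x \<and> F x \<le> 1"
proof
  have "eventually (\<lambda>y. F y \<le> F x) at_bot"
    using eventually_le_at_bot[of x] by eventually_elim (use assms(1) in \<open>simp add: monoD\<close>)
  then show "0 \<le> F x" using tendsto_le[OF trivial_limit_at_bot_linorder tendsto_const assms(2)] by blast
  have "eventually (\<lambda>y. F x \<le> F y) at_top"
    using eventually_ge_at_top[of x] by eventually_elim (use assms(1) in \<open>simp add: monoD\<close>)
  then show "F x \<le> 1" using tendsto_le[OF trivial_limit_at_top_linorder assms(3) tendsto_const] by blast
qed

lemma proj_in:
  fixes D :: "(real^'n) set"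
  assumes "compact D" "D \<noteq> {}"
  shows "proj D Q v \<in> D"
proof -
  have "continuous_on UNIV ((*v) Q)"
    by (rule linear_continuous_on[OF matrix_vector_mul_bounded_linear])
  then have "continuous_on D (\<lambda>y. Q *v (v - y))"
    by (rule continuous_on_compose2) (auto intro: continuous_intros)
  then have "continuous_on D (\<lambda>y. qnorm Q (v - y))"
    unfolding qnorm_def by (intro continuous_intros)
  then obtain y where "y \<in> D" "\<forall>z\<in>D. qnorm Q (v - y) \<le> qnorm Q (v - z)"
    using continuous_attains_inf[OF assms] by blast
  then have "\<exists>y. y \<in> D \<and> (\<forall>z\<in>D. qnorm Q (v - y) \<le> qnorm Q (v - z))" by blast
  then show ?thesis unfolding proj_def by (rule someI2_ex) blast
qed

text \<open>Rounding up (the limit of \<open>[e \<le> t\<^sub>n]\<close> is then \<open>[e \<le> t]\<close>), clipped to \<open>[-n, n]\<close> so that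
  only finitely many values occur.\<close>
definition dyadic_approx :: "nat \<Rightarrow> real \<Rightarrow> real" where
  "dyadic_approx n y = real_of_int (max (- (int n * 2^n)) (min (int n * 2^n) \<lceil>2^n * y\<rceil>)) / 2^n"

lemma dyadic_approx_in_finite_set:
  "dyadic_approx n y \<in> (\<lambda>j. real_of_int j / 2^n) ` {- (int n * 2^n)..int n * 2^n}"
  unfolding dyadic_approx_def by (rule imageI) auto

lemma borel_measurable_dyadic_approx [measurable]: "dyadic_approx n \<in> borel_measurable borel"
  unfolding dyadic_approx_def by measurable

lemma dyadic_approx_bounds:
  assumes "\<bar>y\<bar> \<le> real n"
  shows "y \<le> dyadic_approx n y" "dyadic_approx n y \<le> y + 1 / 2^n"
proof -
  have pos: "(0::real) < 2^n" by simp
  have "2^n * (- y) \<le> 2^n * real n" "2^n * y \<le> 2^n * real n"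
    using assms by (intro mult_left_mono; simp)+
  then have "- (real n * 2^n) \<le> 2^n * y" "2^n * y \<le> real n * 2^n"
    by (simp_all add: algebra_simps)
  then have "- (int n * 2^n) \<le> \<lceil>2^n * y\<rceil>" "\<lceil>2^n * y\<rceil> \<le> int n * 2^n"
    by (simp_all add: le_ceiling_iff ceiling_le_iff)
  then have approx: "dyadic_approx n y = of_int \<lceil>2^n * y\<rceil> / 2^n"
    unfolding dyadic_approx_def by simp
  have "2^n * y \<le> of_int \<lceil>2^n * y\<rceil>" "of_int \<lceil>2^n * y\<rceil> \<le> 2^n * y + 1"
    by linarith+
  then show "y \<le> dyadic_approx n y" "dyadic_approx n y \<le> y + 1 / 2^n"
    unfolding approx using pos by (simp_all only: le_divide_eq divide_le_eq) (simp_all add: algebra_simps)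
qed

lemma dyadic_approx_tendsto:
  "(\<lambda>n. dyadic_approx n y) \<longlonglongrightarrow> y" and eventually_dyadic_approx_ge:
  "eventually (\<lambda>n. y \<le> dyadic_approx n y) sequentially"
proof -
  have large: "eventually (\<lambda>n. \<bar>y\<bar> \<le> real n) sequentially"
    by (rule eventually_sequentiallyI[of "nat \<lceil>\<bar>y\<bar>\<rceil>"]) linarith
  then show ge: "eventually (\<lambda>n. y \<le> dyadic_approx n y) sequentially"
    by eventually_elim (rule dyadic_approx_bounds)
  have "eventually (\<lambda>n. dyadic_approx n y \<le> y + 1 / 2^n) sequentially"
    using large by eventually_elim (rule dyadic_approx_bounds)
  moreover have "(\<lambda>n. y + 1 / (2::real)^n) \<longlonglongrightarrow> y + 0"
    by (intro tendsto_add tendsto_const) (simp add: divide_inverse LIMSEQ_inverse_realpow_zero)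
  ultimately show "(\<lambda>n. dyadic_approx n y) \<longlonglongrightarrow> y"
    using tendsto_sandwich[OF ge _ tendsto_const] by simp
qed

lemma indicator_Collect_of_bool: "x \<in> A \<Longrightarrow> indicator {x\<in>A. P x} x = of_bool (P x)"
  by (simp add: indicator_def)

lemma tendsto_of_bool_le_from_above:
  fixes s :: "nat \<Rightarrow> real"
  assumes "s \<longlonglongrightarrow> t" "eventually (\<lambda>n. t \<le> s n) sequentially"
  shows "(\<lambda>n. of_bool (x \<le> s n) :: real) \<longlonglongrightarrow> of_bool (x \<le> t)"
proof (cases "x \<le> t")
  case True
  have "eventually (\<lambda>n. of_bool (x \<le> s n) = (1::real)) sequentially"
    using assms(2) by eventually_elim (use True in auto)
  then show ?thesis using True by (simp add: tendsto_eventually)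
next
  case False
  have "eventually (\<lambda>n. s n < x) sequentially" using order_tendstoD(2)[OF assms(1)] False by simp
  then have "eventually (\<lambda>n. of_bool (x \<le> s n) = (0::real)) sequentially"
    by eventually_elim auto
  then show ?thesis using False by (simp add: tendsto_eventually)
qed

lemma tendsto_of_bool_le_from_below:
  fixes s :: "nat \<Rightarrow> real"
  assumes "s \<longlonglongrightarrow> t" "\<And>n. s n < t"
  shows "(\<lambda>n. of_bool (x \<le> s n) :: real) \<longlonglongrightarrow> of_bool (x < t)"
proof (cases "x < t")
  case True
  have "eventually (\<lambda>n. x < s n) sequentially" using order_tendstoD(1)[OF assms(1)] True by simp
  then have "eventually (\<lambda>n. of_bool (x \<le> s n) = (1::real)) sequentially"
    by eventually_elim auto
  then show ?thesis using True by (simp add: tendsto_eventually)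
next
  case False
  then have "\<not> x \<le> s n" for n using assms(2)[of n] by linarith
  then show ?thesis using False by simp
qed

definition sgn_Sat_mean :: "(real \<Rightarrow> real) \<Rightarrow> real \<Rightarrow> real \<Rightarrow> real \<Rightarrow> real \<Rightarrow> real \<Rightarrow> real \<Rightarrow> real" where
  "sgn_Sat_mean F Lo lo up Up a x =
     (if Sat Lo lo up Up a = Up then - F (up - x)
      else if Sat Lo lo up Up a = Lo then 1 - F (lo - x)
      else 1 - 2 * F (a - x))"

text \<open>The lower and upper bounds differ only at the tie \<open>z = T\<close>, which has conditional probability
  zero once the noise has a continuous distribution function.\<close>
lemma sgn_Sat_diff_between:
  fixes Lo lo up Up a z :: real
  assumes "Lo \<le> lo" "lo \<le> up" "up \<le> Up" "\<not> (Lo = lo \<and> lo = up \<and> up = Up)"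
  defines "s \<equiv> Sat Lo lo up Up a"
  defines "T \<equiv> (if s = Up then up else if s = Lo then lo else a)"
    and "c \<equiv> (if s = Up then 0 else 1 :: real)"
    and "m \<equiv> (if s \<noteq> Up \<and> s \<noteq> Lo then 1 else 0 :: real)"
  shows "c - of_bool (z \<le> T) - m * of_bool (z < T) \<le> sgn (Sat Lo lo up Up z - s)
       \<and> sgn (Sat Lo lo up Up z - s) \<le> c - m * of_bool (z \<le> T) - of_bool (z < T)"
  using assms unfolding Sat_def by (auto simp: sgn_if split: if_splits)

lemma sgn_Sat_mean_correction_bounds:
  fixes F f :: "real \<Rightarrow> real"
  assumes thresholds: "Lo \<le> lo" "lo \<le> up" "up \<le> Up" "\<not> (Lo = lo \<and> lo = up \<and> up = Up)"
    and deriv: "\<And>z. (F has_real_derivative f z) (at z)" and "mono F" and half: "F 0 = 1 / 2"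
    and lower: "\<And>z. \<bar>z\<bar> \<le> max (2 * C) (max (C + lo) (C - up)) \<Longrightarrow> \<beta> \<le> f z"
    and bounds: "\<bar>x\<bar> \<le> C" "\<bar>a\<bar> \<le> C"
  defines "s \<equiv> Sat Lo lo up Up a"
  defines "\<psi> \<equiv> sgn_Sat_mean F Lo lo up Up a x + F (up - a) * Ind (s = Up) - (1 - F (lo - a)) * Ind (s = Lo)"
  shows "\<beta> * \<bar>x - a\<bar> \<le> \<bar>\<psi>\<bar> \<and> 0 \<le> (x - a) * \<psi>"
proof -
  define R where "R = max (2 * C) (max (C + lo) (C - up))"
  have "\<exists>p q k. \<psi> = k * (F p - F q) \<and> p - q = x - a \<and> 1 \<le> k \<and> \<bar>p\<bar> \<le> R \<and> \<bar>q\<bar> \<le> R"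
  proof (cases "s = Up")
    case True
    then have "s \<noteq> Lo" "up \<le> a" using thresholds unfolding s_def Sat_def by (auto split: if_splits)
    with True show ?thesis using bounds
      by (intro exI[of _ "up - a"] exI[of _ "up - x"] exI[of _ 1])
         (auto simp: \<psi>_def R_def sgn_Sat_mean_def Ind_def s_def[symmetric])
  next
    case False
    show ?thesis
    proof (cases "s = Lo")
      case True
      then have "a \<le> lo" using False thresholds unfolding s_def Sat_def by (auto split: if_splits)
      with True False show ?thesis using bounds
        by (intro exI[of _ "lo - a"] exI[of _ "lo - x"] exI[of _ 1])
           (auto simp: \<psi>_def R_def sgn_Sat_mean_def Ind_def s_def[symmetric])
    next
      case _: False
      with \<open>s \<noteq> Up\<close> show ?thesis using half bounds
        by (intro exI[of _ 0] exI[of _ "a - x"] exI[of _ 2])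
           (auto simp: \<psi>_def R_def sgn_Sat_mean_def Ind_def s_def[symmetric])
    qed
  qed
  then obtain p q k where \<psi>: "\<psi> = k * (F p - F q)" and pq: "p - q = x - a" "1 \<le> k" "\<bar>p\<bar> \<le> R" "\<bar>q\<bar> \<le> R"
    by blast
  have "\<beta> \<le> f z" if "min p q \<le> z" "z \<le> max p q" for z
  proof (rule lower[folded R_def])
    show "\<bar>z\<bar> \<le> R" using pq(3,4) that by (auto simp: abs_le_iff)
  qed
  then have increment: "\<beta> * \<bar>p - q\<bar> \<le> \<bar>F p - F q\<bar>" "0 \<le> (p - q) * (F p - F q)"
    using mono_increment_bounds[OF deriv \<open>mono F\<close>] by blast+
  have "\<bar>F p - F q\<bar> \<le> \<bar>\<psi>\<bar>"
    unfolding \<psi> using pq(2) by (simp add: abs_mult mult_le_cancel_right1)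
  then have "\<beta> * \<bar>x - a\<bar> \<le> \<bar>\<psi>\<bar>" using increment(1) pq(1) by simp
  moreover have "(x - a) * \<psi> = k * ((p - q) * (F p - F q))"
    unfolding \<psi> pq(1) by (simp add: algebra_simps)
  then have "0 \<le> (x - a) * \<psi>" using increment(2) pq(2) by simp
  ultimately show ?thesis ..
qed

lemma (in finite_measure) set_integral_bounded_convergence:
  fixes f :: "nat \<Rightarrow> 'a \<Rightarrow> real"
  assumes [measurable]: "A \<in> sets M" "\<And>n. f n \<in> borel_measurable M" "g \<in> borel_measurable M"
    and bounded: "\<And>n \<omega>. \<omega> \<in> space M \<Longrightarrow> \<bar>f n \<omega>\<bar> \<le> 1"
    and tendsto: "\<And>\<omega>. \<omega> \<in> space M \<Longrightarrow> (\<lambda>n. f n \<omega>) \<longlonglongrightarrow> g \<omega>"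
  shows "(\<lambda>n. \<integral>\<omega>\<in>A. f n \<omega> \<partial>M) \<longlonglongrightarrow> (\<integral>\<omega>\<in>A. g \<omega> \<partial>M)"
  unfolding set_lebesgue_integral_def
proof (rule integral_dominated_convergence[where w = "\<lambda>_. 1"])
  show "AE \<omega> in M. (\<lambda>n. indicator A \<omega> *\<^sub>R f n \<omega>) \<longlonglongrightarrow> indicator A \<omega> *\<^sub>R g \<omega>"
    using tendsto by (intro AE_I2 tendsto_scaleR tendsto_const)
  show "AE \<omega> in M. norm (indicator A \<omega> *\<^sub>R f n \<omega>) \<le> 1" for n
    using bounded by (intro AE_I2) (auto simp: indicator_def)
qed measurable

locale cond_cdf = prob_space M for M :: "'a measure" +
  fixes G :: "'a measure" and e :: "'a \<Rightarrow> real" and F :: "'a \<Rightarrow> real \<Rightarrow> real"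
  assumes subalgebra_G: "subalgebra M G"
    and measurable_e [measurable]: "e \<in> borel_measurable M"
    and measurable_cdf: "\<And>x. (\<lambda>\<omega>. F \<omega> x) \<in> borel_measurable G"
    and cdf_cond_exp: "\<And>x. AE \<omega> in M. F \<omega> x = real_cond_exp M G (indicator {\<omega>\<in>space M. e \<omega> \<le> x}) \<omega>"
    and isCont_cdf: "\<And>\<omega> x. \<omega> \<in> space M \<Longrightarrow> isCont (F \<omega>) x"
    and cdf_bounds: "\<And>\<omega> x. \<omega> \<in> space M \<Longrightarrow> 0 \<le> F \<omega> x \<and> F \<omega> x \<le> 1"

lemma cond_cdfI:
  assumes "prob_space M" "subalgebra M G" "e \<in> borel_measurable M"
    and "\<And>x. (\<lambda>\<omega>. F \<omega> x) \<in> borel_measurable G"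
    and "\<And>x. AE \<omega> in M. F \<omega> x = real_cond_exp M G (indicator {\<omega>\<in>space M. e \<omega> \<le> x}) \<omega>"
    and mono: "\<And>\<omega>. \<omega> \<in> space M \<Longrightarrow> mono (F \<omega>)"
    and at_bot: "\<And>\<omega>. \<omega> \<in> space M \<Longrightarrow> (F \<omega> \<longlongrightarrow> 0) at_bot"
    and at_top: "\<And>\<omega>. \<omega> \<in> space M \<Longrightarrow> (F \<omega> \<longlongrightarrow> 1) at_top"
    and deriv: "\<And>\<omega> x. \<omega> \<in> space M \<Longrightarrow> (F \<omega> has_real_derivative f \<omega> x) (at x)"
  shows "cond_cdf M G e F"
proof (intro cond_cdf.intro cond_cdf_axioms.intro)
  fix \<omega> x assume "\<omega> \<in> space M"
  show "isCont (F \<omega>) x" using deriv[OF \<open>\<omega> \<in> space M\<close>] by (rule DERIV_isCont)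
  show "0 \<le> F \<omega> x \<and> F \<omega> x \<le> 1"
    using mono at_bot at_top \<open>\<omega> \<in> space M\<close> by (intro distribution_function_bounds)
qed (use assms in auto)

sublocale cond_cdf \<subseteq> sigma_finite_subalgebra M G
  by (intro finite_measure_subalgebra_is_sigma_finite finite_measure_subalgebra.intro
      finite_measure_subalgebra_axioms.intro subalgebra_G finite_measure_axioms)

context cond_cdf
begin

lemma space_G: "space G = space M"
  using subalgebra_G by (simp add: subalgebra_def)

lemma measurable_from_G: "f \<in> borel_measurable G \<Longrightarrow> f \<in> borel_measurable M"
  using measurable_from_subalg[OF subalgebra_G] by blast

lemma sets_from_G: "A \<in> sets G \<Longrightarrow> A \<in> sets M"
  using subalgebra_G by (auto simp: subalgebra_def)

lemma integrable_bounded: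
  fixes f :: "'a \<Rightarrow> real"
  shows "f \<in> borel_measurable M \<Longrightarrow> (\<And>\<omega>. \<omega> \<in> space M \<Longrightarrow> \<bar>f \<omega>\<bar> \<le> B) \<Longrightarrow> integrable M f"
  by (rule integrable_const_bound[where B = B]) auto

lemma integrable_indicator_le:
  assumes [measurable]: "g \<in> borel_measurable M"
  shows "integrable M (indicator {\<omega>\<in>space M. e \<omega> \<le> g \<omega>} :: 'a \<Rightarrow> real)"
  by (rule integrable_bounded[where B = 1]) (auto simp: indicator_def)

lemma integrable_indicator_less:
  assumes [measurable]: "g \<in> borel_measurable M"
  shows "integrable M (indicator {\<omega>\<in>space M. e \<omega> < g \<omega>} :: 'a \<Rightarrow> real)"
  by (rule integrable_bounded[where B = 1]) (auto simp: indicator_def)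

lemma sum_indicator_level_sets:
  fixes f :: "real \<Rightarrow> real"
  assumes "finite V" "h \<omega> \<in> V"
  shows "(\<Sum>c\<in>V. indicator {\<omega>\<in>space M. h \<omega> = c} \<omega> * f c) = (if \<omega> \<in> space M then f (h \<omega>) else 0)"
proof -
  have "(\<Sum>c\<in>V. indicator {\<omega>\<in>space M. h \<omega> = c} \<omega> * f c) = (\<Sum>c\<in>V. if \<omega> \<in> space M \<and> h \<omega> = c then f c else 0)"
    by (rule sum.cong) (auto simp: indicator_def)
  also have "\<dots> = (if \<omega> \<in> space M then f (h \<omega>) else 0)"
    using assms by (simp add: sum.delta)
  finally show ?thesis .
qed

lemma measurable_cdf_comp_finite_range:
  assumes [measurable]: "h \<in> borel_measurable G" and "finite V" "\<And>\<omega>. \<omega> \<in> space M \<Longrightarrow> h \<omega> \<in> V"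
  shows "(\<lambda>\<omega>. F \<omega> (h \<omega>)) \<in> borel_measurable G"
proof -
  have [measurable]: "(\<lambda>\<omega>. F \<omega> c) \<in> borel_measurable G" for c by (rule measurable_cdf)
  have "(\<lambda>\<omega>. \<Sum>c\<in>V. indicator {\<omega>\<in>space G. h \<omega> = c} \<omega> * F \<omega> c) \<in> borel_measurable G"
    by measurable
  then show ?thesis
    by (rule measurable_cong[THEN iffD1, rotated])
       (simp add: space_G sum_indicator_level_sets[OF assms(2,3)])
qed

lemma cond_exp_indicator_le_finite_range:
  assumes [measurable]: "h \<in> borel_measurable G" and "finite V" "\<And>\<omega>. \<omega> \<in> space M \<Longrightarrow> h \<omega> \<in> V"
  shows "AE \<omega> in M. real_cond_exp M G (indicator {\<omega>\<in>space M. e \<omega> \<le> h \<omega>}) \<omega> = F \<omega> (h \<omega>)"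
proof -
  define I where "I c = (indicator {\<omega>\<in>space M. h \<omega> = c} :: 'a \<Rightarrow> real)" for c
  define X where "X c = (indicator {\<omega>\<in>space M. e \<omega> \<le> c} :: 'a \<Rightarrow> real)" for c
  have IG [measurable]: "I c \<in> borel_measurable G" for c
    unfolding I_def space_G[symmetric] by measurable
  have [measurable]: "I c \<in> borel_measurable M" "X c \<in> borel_measurable M" for c
    unfolding X_def using measurable_from_G[OF IG] by measurable
  have integrable: "integrable M (\<lambda>\<omega>. I c \<omega> * X c \<omega>)" for c
    by (rule integrable_bounded[where B = 1], measurable) (auto simp: I_def X_def indicator_def)
  have split: "indicator {\<omega>\<in>space M. e \<omega> \<le> h \<omega>} = (\<lambda>\<omega>. \<Sum>c\<in>V. I c \<omega> * X c \<omega>)"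
  proof
    fix \<omega>
    show "indicator {\<omega>\<in>space M. e \<omega> \<le> h \<omega>} \<omega> = (\<Sum>c\<in>V. I c \<omega> * X c \<omega>)"
      by (cases "\<omega> \<in> space M")
         (simp_all add: I_def X_def sum_indicator_level_sets[OF assms(2,3)], simp add: indicator_def)
  qed
  have "AE \<omega> in M. real_cond_exp M G (\<lambda>\<omega>. \<Sum>c\<in>V. I c \<omega> * X c \<omega>) \<omega>
      = (\<Sum>c\<in>V. real_cond_exp M G (\<lambda>\<omega>. I c \<omega> * X c \<omega>) \<omega>)"
    by (rule real_cond_exp_sum) (rule integrable)
  moreover have "AE \<omega> in M. \<forall>c\<in>V. real_cond_exp M G (\<lambda>\<omega>. I c \<omega> * X c \<omega>) \<omega> = I c \<omega> * F \<omega> c"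
  proof (rule AE_finite_allI[OF assms(2)])
    fix c
    have "AE \<omega> in M. real_cond_exp M G (\<lambda>\<omega>. I c \<omega> * X c \<omega>) \<omega> = I c \<omega> * real_cond_exp M G (X c) \<omega>"
      by (rule real_cond_exp_mult) (use integrable in auto)
    then show "AE \<omega> in M. real_cond_exp M G (\<lambda>\<omega>. I c \<omega> * X c \<omega>) \<omega> = I c \<omega> * F \<omega> c"
      using cdf_cond_exp[of c] unfolding X_def by eventually_elim simp
  qed
  ultimately show ?thesis unfolding split using AE_space
    by eventually_elim (simp add: I_def sum_indicator_level_sets[OF assms(2,3)])
qed

lemma set_integral_eq_if_cond_exp_eq:
  assumes "AE \<omega> in M. real_cond_exp M G f \<omega> = u \<omega>" "integrable M f" "A \<in> sets G"
    and [measurable]: "u \<in> borel_measurable M"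
  shows "(\<integral>\<omega>\<in>A. f \<omega> \<partial>M) = (\<integral>\<omega>\<in>A. u \<omega> \<partial>M)"
proof -
  have [measurable]: "A \<in> sets M" using sets_from_G assms(3) by blast
  have "(\<integral>\<omega>\<in>A. f \<omega> \<partial>M) = (\<integral>\<omega>\<in>A. real_cond_exp M G f \<omega> \<partial>M)"
    by (rule real_cond_exp_intA[OF assms(2,3)])
  also have "\<dots> = (\<integral>\<omega>\<in>A. u \<omega> \<partial>M)"
    unfolding set_lebesgue_integral_def by (rule integral_cong_AE) (use assms(1) in auto)
  finally show ?thesis .
qed

lemma measurable_cdf_comp [measurable]:
  assumes [measurable]: "g \<in> borel_measurable G"
  shows "(\<lambda>\<omega>. F \<omega> (g \<omega>)) \<in> borel_measurable G"
proof (rule borel_measurable_LIMSEQ_real[where u = "\<lambda>n \<omega>. F \<omega> (dyadic_approx n (g \<omega>))"])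
  show "(\<lambda>n. F \<omega> (dyadic_approx n (g \<omega>))) \<longlonglongrightarrow> F \<omega> (g \<omega>)" if "\<omega> \<in> space G" for \<omega>
    using that space_G by (intro isCont_tendsto_compose[OF isCont_cdf dyadic_approx_tendsto]) auto
  show "(\<lambda>\<omega>. F \<omega> (dyadic_approx n (g \<omega>))) \<in> borel_measurable G" for n
    by (rule measurable_cdf_comp_finite_range[OF _ finite_imageI dyadic_approx_in_finite_set])
       simp_all
qed

lemma set_integral_indicator_le_limit:
  fixes s :: "nat \<Rightarrow> 'a \<Rightarrow> real"
  assumes A: "A \<in> sets G"
    and s_G: "\<And>n. s n \<in> borel_measurable G" and t_G: "t \<in> borel_measurable G"
    and [measurable]: "f \<in> borel_measurable M"
    and s_tendsto: "\<And>\<omega>. \<omega> \<in> space M \<Longrightarrow> (\<lambda>n. s n \<omega>) \<longlonglongrightarrow> t \<omega>"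
    and indicator_tendsto:
      "\<And>\<omega>. \<omega> \<in> space M \<Longrightarrow> (\<lambda>n. indicator {\<omega>\<in>space M. e \<omega> \<le> s n \<omega>} \<omega>) \<longlonglongrightarrow> f \<omega>"
    and eq: "\<And>n. (\<integral>\<omega>\<in>A. indicator {\<omega>\<in>space M. e \<omega> \<le> s n \<omega>} \<omega> \<partial>M) = (\<integral>\<omega>\<in>A. F \<omega> (s n \<omega>) \<partial>M)"
  shows "(\<integral>\<omega>\<in>A. f \<omega> \<partial>M) = (\<integral>\<omega>\<in>A. F \<omega> (t \<omega>) \<partial>M)"
proof -
  have [measurable]: "A \<in> sets M" "s n \<in> borel_measurable M" "t \<in> borel_measurable M" for n
    using A s_G t_G sets_from_G measurable_from_G by auto
  have "(\<lambda>n. \<integral>\<omega>\<in>A. indicator {\<omega>\<in>space M. e \<omega> \<le> s n \<omega>} \<omega> \<partial>M) \<longlonglongrightarrow> (\<integral>\<omega>\<in>A. f \<omega> \<partial>M)"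
    using indicator_tendsto by (intro set_integral_bounded_convergence) (auto simp: indicator_def)
  moreover have "(\<lambda>n. \<integral>\<omega>\<in>A. F \<omega> (s n \<omega>) \<partial>M) \<longlonglongrightarrow> (\<integral>\<omega>\<in>A. F \<omega> (t \<omega>) \<partial>M)"
    using cdf_bounds s_tendsto s_G t_G
    by (intro set_integral_bounded_convergence isCont_tendsto_compose[OF isCont_cdf])
       (auto intro: measurable_from_G)
  ultimately show ?thesis unfolding eq by (rule LIMSEQ_unique)
qed

lemma set_integral_indicator_le:
  assumes [measurable]: "g \<in> borel_measurable G" and A: "A \<in> sets G"
  shows "(\<integral>\<omega>\<in>A. indicator {\<omega>\<in>space M. e \<omega> \<le> g \<omega>} \<omega> \<partial>M) = (\<integral>\<omega>\<in>A. F \<omega> (g \<omega>) \<partial>M)"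
proof (rule set_integral_indicator_le_limit[OF A, where s = "\<lambda>n \<omega>. dyadic_approx n (g \<omega>)"])
  fix n
  have "AE \<omega> in M. real_cond_exp M G (indicator {\<omega>\<in>space M. e \<omega> \<le> dyadic_approx n (g \<omega>)}) \<omega>
      = F \<omega> (dyadic_approx n (g \<omega>))"
    by (rule cond_exp_indicator_le_finite_range[OF _ finite_imageI dyadic_approx_in_finite_set])
       simp_all
  then show "(\<integral>\<omega>\<in>A. indicator {\<omega>\<in>space M. e \<omega> \<le> dyadic_approx n (g \<omega>)} \<omega> \<partial>M)
      = (\<integral>\<omega>\<in>A. F \<omega> (dyadic_approx n (g \<omega>)) \<partial>M)"
    using A measurable_from_G[OF assms(1)] measurable_from_G[OF measurable_cdf_comp]
    by (intro set_integral_eq_if_cond_exp_eq integrable_indicator_le) auto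
next
  fix \<omega> assume "\<omega> \<in> space M"
  show "(\<lambda>n. indicator {\<omega>\<in>space M. e \<omega> \<le> dyadic_approx n (g \<omega>)} \<omega>)
      \<longlonglongrightarrow> (indicator {\<omega>\<in>space M. e \<omega> \<le> g \<omega>} \<omega> :: real)"
    by (subst indicator_Collect_of_bool[OF \<open>\<omega> \<in> space M\<close>])+
       (rule tendsto_of_bool_le_from_above[OF dyadic_approx_tendsto eventually_dyadic_approx_ge])
next
  show "(\<lambda>\<omega>. dyadic_approx n (g \<omega>)) \<in> borel_measurable G" for n by measurable
  show "(\<lambda>n. dyadic_approx n (g \<omega>)) \<longlonglongrightarrow> g \<omega>" for \<omega> by (rule dyadic_approx_tendsto)
  show "(indicator {\<omega>\<in>space M. e \<omega> \<le> g \<omega>} :: 'a \<Rightarrow> real) \<in> borel_measurable M"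
    using measurable_from_G[OF assms(1)] by measurable
qed (fact assms(1))

lemma set_integral_indicator_less:
  assumes [measurable]: "g \<in> borel_measurable G" and A: "A \<in> sets G"
  shows "(\<integral>\<omega>\<in>A. indicator {\<omega>\<in>space M. e \<omega> < g \<omega>} \<omega> \<partial>M) = (\<integral>\<omega>\<in>A. F \<omega> (g \<omega>) \<partial>M)"
proof (rule set_integral_indicator_le_limit[OF A, where s = "\<lambda>n \<omega>. g \<omega> - 1 / Suc n"])
  have "(\<lambda>n. g \<omega> - 1 / Suc n) \<longlonglongrightarrow> g \<omega> - 0" for \<omega>
    by (intro tendsto_diff tendsto_const LIMSEQ_Suc[OF lim_const_over_n])
  then show lim: "(\<lambda>n. g \<omega> - 1 / Suc n) \<longlonglongrightarrow> g \<omega>" for \<omega> by simp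
  fix \<omega> assume "\<omega> \<in> space M"
  show "(\<lambda>n. indicator {\<omega>\<in>space M. e \<omega> \<le> g \<omega> - 1 / Suc n} \<omega>)
      \<longlonglongrightarrow> (indicator {\<omega>\<in>space M. e \<omega> < g \<omega>} \<omega> :: real)"
    by (subst indicator_Collect_of_bool[OF \<open>\<omega> \<in> space M\<close>])+
       (rule tendsto_of_bool_le_from_below[OF lim], simp)
next
  show "(\<lambda>\<omega>. g \<omega> - 1 / Suc n) \<in> borel_measurable G" for n by measurable
  show "(indicator {\<omega>\<in>space M. e \<omega> < g \<omega>} :: 'a \<Rightarrow> real) \<in> borel_measurable M"
    using measurable_from_G[OF assms(1)] by measurable
  show "(\<integral>\<omega>\<in>A. indicator {\<omega>\<in>space M. e \<omega> \<le> g \<omega> - 1 / Suc n} \<omega> \<partial>M)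
      = (\<integral>\<omega>\<in>A. F \<omega> (g \<omega> - 1 / Suc n) \<partial>M)" for n
    using A by (intro set_integral_indicator_le) measurable
qed (fact assms(1))

lemma cond_exp_indicator_le:
  assumes [measurable]: "g \<in> borel_measurable G"
  shows "AE \<omega> in M. real_cond_exp M G (indicator {\<omega>\<in>space M. e \<omega> \<le> g \<omega>}) \<omega> = F \<omega> (g \<omega>)"
  using cdf_bounds measurable_from_G[OF assms] measurable_from_G[OF measurable_cdf_comp[OF assms]]
  by (intro real_cond_exp_charact set_integral_indicator_le integrable_indicator_le
      integrable_bounded[where B = 1]) auto

lemma cond_exp_indicator_less:
  assumes [measurable]: "g \<in> borel_measurable G"
  shows "AE \<omega> in M. real_cond_exp M G (indicator {\<omega>\<in>space M. e \<omega> < g \<omega>}) \<omega> = F \<omega> (g \<omega>)"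
  using cdf_bounds measurable_from_G[OF assms] measurable_from_G[OF measurable_cdf_comp[OF assms]]
  by (intro real_cond_exp_charact set_integral_indicator_less integrable_indicator_less
      integrable_bounded[where B = 1]) auto

lemma cond_exp_indicator_combination:
  assumes [measurable]: "c \<in> borel_measurable G" "p \<in> borel_measurable G" "q \<in> borel_measurable G"
      "t \<in> borel_measurable G"
    and bounded: "\<And>\<omega>. \<omega> \<in> space M \<Longrightarrow> \<bar>c \<omega>\<bar> \<le> B \<and> \<bar>p \<omega>\<bar> \<le> B \<and> \<bar>q \<omega>\<bar> \<le> B"
  shows "AE \<omega> in M. real_cond_exp M G (\<lambda>\<omega>. c \<omega> - p \<omega> * indicator {\<omega>\<in>space M. e \<omega> \<le> t \<omega>} \<omega>
            - q \<omega> * indicator {\<omega>\<in>space M. e \<omega> < t \<omega>} \<omega>) \<omega>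
         = c \<omega> - p \<omega> * F \<omega> (t \<omega>) - q \<omega> * F \<omega> (t \<omega>)"
proof -
  have [measurable]: "c \<in> borel_measurable M" "p \<in> borel_measurable M" "q \<in> borel_measurable M"
      "t \<in> borel_measurable M"
    using measurable_from_G assms(1-4) by blast+
  define X where "X = (indicator {\<omega>\<in>space M. e \<omega> \<le> t \<omega>} :: 'a \<Rightarrow> real)"
  define Y where "Y = (indicator {\<omega>\<in>space M. e \<omega> < t \<omega>} :: 'a \<Rightarrow> real)"
  have [measurable]: "X \<in> borel_measurable M" "Y \<in> borel_measurable M"
    unfolding X_def Y_def by measurable
  have integrable: "integrable M c" "integrable M (\<lambda>\<omega>. p \<omega> * X \<omega>)" "integrable M (\<lambda>\<omega>. q \<omega> * Y \<omega>)"
    using bounded by (intro integrable_bounded[where B = B]; force simp: X_def Y_def indicator_def)+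
  have "AE \<omega> in M. real_cond_exp M G (\<lambda>\<omega>. c \<omega> - p \<omega> * X \<omega> - q \<omega> * Y \<omega>) \<omega>
      = real_cond_exp M G (\<lambda>\<omega>. c \<omega> - p \<omega> * X \<omega>) \<omega> - real_cond_exp M G (\<lambda>\<omega>. q \<omega> * Y \<omega>) \<omega>"
    using integrable by (intro real_cond_exp_diff) auto
  moreover have "AE \<omega> in M. real_cond_exp M G (\<lambda>\<omega>. c \<omega> - p \<omega> * X \<omega>) \<omega>
      = real_cond_exp M G c \<omega> - real_cond_exp M G (\<lambda>\<omega>. p \<omega> * X \<omega>) \<omega>"
    using integrable by (intro real_cond_exp_diff)
  moreover have "AE \<omega> in M. real_cond_exp M G c \<omega> = c \<omega>"
    using integrable by (intro real_cond_exp_F_meas) auto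
  moreover have "AE \<omega> in M. real_cond_exp M G (\<lambda>\<omega>. p \<omega> * X \<omega>) \<omega> = p \<omega> * real_cond_exp M G X \<omega>"
    using integrable by (intro real_cond_exp_mult) auto
  moreover have "AE \<omega> in M. real_cond_exp M G (\<lambda>\<omega>. q \<omega> * Y \<omega>) \<omega> = q \<omega> * real_cond_exp M G Y \<omega>"
    using integrable by (intro real_cond_exp_mult) auto
  moreover have "AE \<omega> in M. real_cond_exp M G X \<omega> = F \<omega> (t \<omega>)"
    unfolding X_def by (rule cond_exp_indicator_le) simp
  moreover have "AE \<omega> in M. real_cond_exp M G Y \<omega> = F \<omega> (t \<omega>)"
    unfolding Y_def by (rule cond_exp_indicator_less) simp
  ultimately show ?thesis unfolding X_def[symmetric] Y_def[symmetric]
    by eventually_elim simp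
qed

lemma cond_exp_between_indicators:
  assumes [measurable]: "c \<in> borel_measurable G" "p \<in> borel_measurable G" "q \<in> borel_measurable G"
      "t \<in> borel_measurable G"
    and bounded: "\<And>\<omega>. \<omega> \<in> space M \<Longrightarrow> \<bar>c \<omega>\<bar> \<le> B \<and> \<bar>p \<omega>\<bar> \<le> B \<and> \<bar>q \<omega>\<bar> \<le> B"
    and "integrable M f"
    and between: "AE \<omega> in M.
      c \<omega> - p \<omega> * indicator {\<omega>\<in>space M. e \<omega> \<le> t \<omega>} \<omega> - q \<omega> * indicator {\<omega>\<in>space M. e \<omega> < t \<omega>} \<omega> \<le> f \<omega> \<and>
      f \<omega> \<le> c \<omega> - q \<omega> * indicator {\<omega>\<in>space M. e \<omega> \<le> t \<omega>} \<omega> - p \<omega> * indicator {\<omega>\<in>space M. e \<omega> < t \<omega>} \<omega>"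
  shows "AE \<omega> in M. real_cond_exp M G f \<omega> = c \<omega> - (p \<omega> + q \<omega>) * F \<omega> (t \<omega>)"
proof -
  have [measurable]: "c \<in> borel_measurable M" "p \<in> borel_measurable M" "q \<in> borel_measurable M"
      "t \<in> borel_measurable M"
    using measurable_from_G assms(1-4) by blast+
  define lower where "lower = (\<lambda>\<omega>. c \<omega> - p \<omega> * indicator {\<omega>\<in>space M. e \<omega> \<le> t \<omega>} \<omega>
      - q \<omega> * indicator {\<omega>\<in>space M. e \<omega> < t \<omega>} \<omega>)"
  define upper where "upper = (\<lambda>\<omega>. c \<omega> - q \<omega> * indicator {\<omega>\<in>space M. e \<omega> \<le> t \<omega>} \<omega>
      - p \<omega> * indicator {\<omega>\<in>space M. e \<omega> < t \<omega>} \<omega>)"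
  have measurable: "lower \<in> borel_measurable M" "upper \<in> borel_measurable M"
    unfolding lower_def upper_def by measurable
  have "\<bar>lower \<omega>\<bar> \<le> 3 * B" "\<bar>upper \<omega>\<bar> \<le> 3 * B" if "\<omega> \<in> space M" for \<omega>
    using bounded[OF that] by (force simp: lower_def upper_def indicator_def)+
  then have integrable: "integrable M lower" "integrable M upper"
    using integrable_bounded[OF measurable(1)] integrable_bounded[OF measurable(2)] by blast+
  have "AE \<omega> in M. lower \<omega> \<le> f \<omega>" "AE \<omega> in M. f \<omega> \<le> upper \<omega>"
    using between unfolding lower_def upper_def by (auto elim: eventually_mono)
  then have "AE \<omega> in M. real_cond_exp M G lower \<omega> \<le> real_cond_exp M G f \<omega>"
      "AE \<omega> in M. real_cond_exp M G f \<omega> \<le> real_cond_exp M G upper \<omega>"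
    using integrable \<open>integrable M f\<close> by (simp_all add: real_cond_exp_mono)
  moreover have "AE \<omega> in M. real_cond_exp M G lower \<omega> = c \<omega> - (p \<omega> + q \<omega>) * F \<omega> (t \<omega>)"
    unfolding lower_def using cond_exp_indicator_combination[OF assms(1-4), where B = B] bounded
    by (auto simp: algebra_simps elim: eventually_mono)
  moreover have "AE \<omega> in M. real_cond_exp M G upper \<omega> = c \<omega> - (p \<omega> + q \<omega>) * F \<omega> (t \<omega>)"
    unfolding upper_def using cond_exp_indicator_combination[OF assms(1,3,2,4), where B = B] bounded
    by (auto simp: algebra_simps elim: eventually_mono)
  ultimately show ?thesis by eventually_elim simp
qed

lemma cond_exp_sgn_Sat:
  assumes [measurable]: "Lo \<in> borel_measurable G" "lo \<in> borel_measurable G" "up \<in> borel_measurable G"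
      "Up \<in> borel_measurable G" "x \<in> borel_measurable G" "a \<in> borel_measurable G"
    and thresholds: "AE \<omega> in M. Lo \<omega> \<le> lo \<omega> \<and> lo \<omega> \<le> up \<omega> \<and> up \<omega> \<le> Up \<omega>
        \<and> \<not> (Lo \<omega> = lo \<omega> \<and> lo \<omega> = up \<omega> \<and> up \<omega> = Up \<omega>)"
    and f: "\<And>\<omega>. \<omega> \<in> space M \<Longrightarrow>
      f \<omega> = sgn (Sat (Lo \<omega>) (lo \<omega>) (up \<omega>) (Up \<omega>) (x \<omega> + e \<omega>) - Sat (Lo \<omega>) (lo \<omega>) (up \<omega>) (Up \<omega>) (a \<omega>))"
  shows "AE \<omega> in M. real_cond_exp M G f \<omega> = sgn_Sat_mean (F \<omega>) (Lo \<omega>) (lo \<omega>) (up \<omega>) (Up \<omega>) (a \<omega>) (x \<omega>)"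
proof -
  define s where "s \<omega> = Sat (Lo \<omega>) (lo \<omega>) (up \<omega>) (Up \<omega>) (a \<omega>)" for \<omega>
  define T where "T \<omega> = (if s \<omega> = Up \<omega> then up \<omega> else if s \<omega> = Lo \<omega> then lo \<omega> else a \<omega>)" for \<omega>
  define c where "c \<omega> = (if s \<omega> = Up \<omega> then 0 else 1 :: real)" for \<omega>
  define m where "m \<omega> = (if s \<omega> \<noteq> Up \<omega> \<and> s \<omega> \<noteq> Lo \<omega> then 1 else 0 :: real)" for \<omega>
  have [measurable]: "s \<in> borel_measurable G" unfolding s_def Sat_def by measurable
  have [measurable]: "T \<in> borel_measurable G" "c \<in> borel_measurable G" "m \<in> borel_measurable G"
    unfolding T_def c_def m_def by measurable
  have [measurable]: "Lo \<in> borel_measurable M" "lo \<in> borel_measurable M" "up \<in> borel_measurable M"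
      "Up \<in> borel_measurable M" "x \<in> borel_measurable M" "s \<in> borel_measurable M"
    using measurable_from_G assms(1-6) \<open>s \<in> borel_measurable G\<close> by blast+
  have "f \<in> borel_measurable M"
  proof -
    have "(\<lambda>\<omega>. sgn (Sat (Lo \<omega>) (lo \<omega>) (up \<omega>) (Up \<omega>) (x \<omega> + e \<omega>) - s \<omega>)) \<in> borel_measurable M"
      unfolding Sat_def by measurable
    then show ?thesis by (rule measurable_cong[THEN iffD1, rotated]) (simp add: f s_def)
  qed
  then have "integrable M f" by (rule integrable_bounded[where B = 1]) (simp add: f sgn_if)
  have "AE \<omega> in M. real_cond_exp M G f \<omega> = c \<omega> - (1 + m \<omega>) * F \<omega> (T \<omega> - x \<omega>)"
  proof (rule cond_exp_between_indicators[where B = 1])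
    show "AE \<omega> in M.
      c \<omega> - 1 * indicator {\<omega>\<in>space M. e \<omega> \<le> T \<omega> - x \<omega>} \<omega> - m \<omega> * indicator {\<omega>\<in>space M. e \<omega> < T \<omega> - x \<omega>} \<omega> \<le> f \<omega> \<and>
      f \<omega> \<le> c \<omega> - m \<omega> * indicator {\<omega>\<in>space M. e \<omega> \<le> T \<omega> - x \<omega>} \<omega> - 1 * indicator {\<omega>\<in>space M. e \<omega> < T \<omega> - x \<omega>} \<omega>"
      using thresholds AE_space
    proof eventually_elim
      case (elim \<omega>)
      have "indicator {\<omega>\<in>space M. e \<omega> \<le> T \<omega> - x \<omega>} \<omega> = (of_bool (x \<omega> + e \<omega> \<le> T \<omega>) :: real)"
        "indicator {\<omega>\<in>space M. e \<omega> < T \<omega> - x \<omega>} \<omega> = (of_bool (x \<omega> + e \<omega> < T \<omega>) :: real)"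
        using elim(2) by (auto simp: indicator_def)
      moreover note sgn_Sat_diff_between[of "Lo \<omega>" "lo \<omega>" "up \<omega>" "Up \<omega>" "a \<omega>" "x \<omega> + e \<omega>",
          folded s_def, folded T_def c_def m_def]
      ultimately show ?case using elim(1) by (simp add: f[OF elim(2), folded s_def])
    qed
  next
    show "integrable M f" by fact
    show "(\<lambda>\<omega>. T \<omega> - x \<omega>) \<in> borel_measurable G" by measurable
    show "(\<lambda>_. 1) \<in> borel_measurable G" by measurable
    show "\<bar>c \<omega>\<bar> \<le> 1 \<and> \<bar>1::real\<bar> \<le> 1 \<and> \<bar>m \<omega>\<bar> \<le> 1" for \<omega> by (simp add: c_def m_def)
  qed fact+
  then show ?thesis
    by eventually_elim (auto simp: sgn_Sat_mean_def c_def m_def T_def s_def)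
qed

end

theorem lemma8:
  fixes M :: "'a measure"
    and F :: "nat \<Rightarrow> 'a measure"
    and \<phi> :: "nat \<Rightarrow> 'a \<Rightarrow> real^'d"
    and \<theta> :: "real^'d" and D :: "(real^'d) set"
    and Ck :: "nat \<Rightarrow> 'a \<Rightarrow> real"
    and \<epsilon> y :: "nat \<Rightarrow> 'a \<Rightarrow> real"
    and l u L U :: "nat \<Rightarrow> 'a \<Rightarrow> real"
    and Mc Cc :: real
    and b :: "nat \<Rightarrow> 'a \<Rightarrow> real"
    and Fd fd :: "nat \<Rightarrow> 'a \<Rightarrow> real \<Rightarrow> real"
    and thb :: "nat \<Rightarrow> 'a \<Rightarrow> real^'d" and th0 :: "real^'d"
    and Pb :: "nat \<Rightarrow> 'a \<Rightarrow> real^'d^'d" and P0 :: "real^'d^'d"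
    and mub :: "nat \<Rightarrow> 'a \<Rightarrow> real"
  assumes prob: "prob_space M"
    and filt: "filtration (space M) F"
    and subalg: "\<And>k. subalgebra M (F k)"
    \<comment> \<open>model\<close>
    and phi_meas: "\<And>k. \<phi> k \<in> borel_measurable (F k)"
    and eps_meas: "\<And>k. \<epsilon> (Suc k) \<in> borel_measurable (F (Suc k))"
    and model: "\<And>k \<omega>. \<omega> \<in> space M \<Longrightarrow>
       y (Suc k) \<omega> = Sat (L k \<omega>) (l k \<omega>) (u k \<omega>) (U k \<omega>) (\<phi> k \<omega> \<bullet> \<theta> + \<epsilon> (Suc k) \<omega>)"
    \<comment> \<open>A1\<close>
    and phi_bdd: "\<exists>B. \<forall>k. \<forall>\<omega>\<in>space M. norm (\<phi> k \<omega>) \<le> B"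
    and D_convex: "convex D" and D_compact: "compact D"
    and theta_int: "\<theta> \<in> interior D"
    and Ck_meas: "\<And>k. Ck k \<in> borel_measurable (F k)"
    and Ck_bdd: "\<exists>B. \<forall>k. \<forall>\<omega>\<in>space M. \<bar>Ck k \<omega>\<bar> \<le> B"
    and Ck_sup: "\<And>k \<omega> x. \<omega> \<in> space M \<Longrightarrow> x \<in> D \<Longrightarrow> \<bar>\<phi> k \<omega> \<bullet> x\<bar> \<le> Ck k \<omega>"
    \<comment> \<open>A2\<close>
    and l_meas: "\<And>k. l k \<in> borel_measurable (F k)"
    and u_meas: "\<And>k. u k \<in> borel_measurable (F k)"
    and L_meas: "\<And>k. L k \<in> borel_measurable (F k)"
    and U_meas: "\<And>k. U k \<in> borel_measurable (F k)"
    and order: "AE \<omega> in M. \<forall>k. L k \<omega> \<le> l k \<omega> \<and> l k \<omega> \<le> u k \<omega> \<and> u k \<omega> \<le> U k \<omega>"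
    and Mc_bound: "AE \<omega> in M. \<forall>k. max (l k \<omega>) (- u k \<omega>) \<le> Mc"
    and nondegen: "\<And>k. AE \<omega> in M. \<not> (L k \<omega> = l k \<omega> \<and> l k \<omega> = u k \<omega> \<and> u k \<omega> = U k \<omega>)"
    and b_meas: "\<And>k. b k \<in> borel_measurable (F k)"
    and b_bdd: "\<exists>c>0. \<forall>k. \<forall>\<omega>\<in>space M. c \<le> b k \<omega> \<and> b k \<omega> \<le> 1"
    \<comment> \<open>A3: F_{k+1} is the conditional distribution function of eps_{k+1} given F_k,
        with continuous density f_{k+1}\<close>
    and Fd_meas: "\<And>k x. (\<lambda>\<omega>. Fd (Suc k) \<omega> x) \<in> borel_measurable (F k)"
    and Fd_cond: "\<And>k x. AE \<omega> in M. Fd (Suc k) \<omega> x =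
       real_cond_exp M (F k) (indicator {\<omega>' \<in> space M. \<epsilon> (Suc k) \<omega>' \<le> x}) \<omega>"
    and Fd_mono: "\<And>k \<omega>. \<omega> \<in> space M \<Longrightarrow> mono (Fd (Suc k) \<omega>)"
    and Fd_bot: "\<And>k \<omega>. \<omega> \<in> space M \<Longrightarrow> (Fd (Suc k) \<omega> \<longlongrightarrow> 0) at_bot"
    and Fd_top: "\<And>k \<omega>. \<omega> \<in> space M \<Longrightarrow> (Fd (Suc k) \<omega> \<longlongrightarrow> 1) at_top"
    and Fd_deriv: "\<And>k \<omega> x. \<omega> \<in> space M \<Longrightarrow>
       (Fd (Suc k) \<omega> has_real_derivative fd (Suc k) \<omega> x) (at x)"
    and fd_cont: "\<And>k \<omega>. \<omega> \<in> space M \<Longrightarrow> continuous_on UNIV (fd (Suc k) \<omega>)"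
    and Fd_half: "\<And>k \<omega>. \<omega> \<in> space M \<Longrightarrow> Fd (Suc k) \<omega> 0 = 1 / 2"
    and Cc_ge: "AE \<omega> in M. \<forall>k. Ck k \<omega> \<le> Cc"
    and dens_bdd: "\<exists>c>0. \<exists>c'. AE \<omega> in M. \<forall>k x. \<bar>x\<bar> \<le> max (2 * Cc) (Cc + Mc) \<longrightarrow>
       c \<le> fd (Suc k) \<omega> x \<and> fd (Suc k) \<omega> x \<le> c'"
    \<comment> \<open>TSWLAD Step 1\<close>
    and th0_D: "th0 \<in> D" and P0_pd: "pos_def P0"
    and thb0: "\<And>\<omega>. \<omega> \<in> space M \<Longrightarrow> thb 0 \<omega> = th0"
    and Pb0: "\<And>\<omega>. \<omega> \<in> space M \<Longrightarrow> Pb 0 \<omega> = P0"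
    and mub_meas: "\<And>k. mub k \<in> borel_measurable (F k)"
    and mub_bdd: "\<exists>c>0. \<exists>c'. \<forall>k. \<forall>\<omega>\<in>space M. c \<le> mub k \<omega> \<and> mub k \<omega> \<le> c'"
    and Pb_rec: "\<And>k \<omega>. \<omega> \<in> space M \<Longrightarrow>
       Pb (Suc k) \<omega> = Pb k \<omega> -
         ((1 / (mub k \<omega> + betabar (fd (Suc k) \<omega>) (Ck k \<omega>) (l k \<omega>) (u k \<omega>) * (b k \<omega>)\<^sup>2
                 * (\<phi> k \<omega> \<bullet> (Pb k \<omega> *v \<phi> k \<omega>))))
          * betabar (fd (Suc k) \<omega>) (Ck k \<omega>) (l k \<omega>) (u k \<omega>) * (b k \<omega>)\<^sup>2)
         *\<^sub>R (Pb k \<omega> ** outer (\<phi> k \<omega>) (\<phi> k \<omega>) ** Pb k \<omega>)"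
    and thb_rec: "\<And>k \<omega>. \<omega> \<in> space M \<Longrightarrow>
       thb (Suc k) \<omega> = proj D (matrix_inv (Pb (Suc k) \<omega>))
         (thb k \<omega> +
          ((1 / (mub k \<omega> + betabar (fd (Suc k) \<omega>) (Ck k \<omega>) (l k \<omega>) (u k \<omega>) * (b k \<omega>)\<^sup>2
                 * (\<phi> k \<omega> \<bullet> (Pb k \<omega> *v \<phi> k \<omega>)))) * b k \<omega>
           * (sgn (y (Suc k) \<omega> - Sat (L k \<omega>) (l k \<omega>) (u k \<omega>) (U k \<omega>) (\<phi> k \<omega> \<bullet> thb k \<omega>))
              + Fd (Suc k) \<omega> (u k \<omega> - \<phi> k \<omega> \<bullet> thb k \<omega>)
                * Ind (Sat (L k \<omega>) (l k \<omega>) (u k \<omega>) (U k \<omega>) (\<phi> k \<omega> \<bullet> thb k \<omega>) = U k \<omega>)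
              - (1 - Fd (Suc k) \<omega> (l k \<omega> - \<phi> k \<omega> \<bullet> thb k \<omega>))
                * Ind (Sat (L k \<omega>) (l k \<omega>) (u k \<omega>) (U k \<omega>) (\<phi> k \<omega> \<bullet> thb k \<omega>) = L k \<omega>)))
          *\<^sub>R (Pb k \<omega> *v \<phi> k \<omega>))"
    and thb_meas: "\<And>k. thb k \<in> borel_measurable (F k)"
  shows "\<forall>k. AE \<omega> in M.
     (let a = \<phi> k \<omega> \<bullet> thb k \<omega>;
          S = Sat (L k \<omega>) (l k \<omega>) (u k \<omega>) (U k \<omega>);
          e = \<phi> k \<omega> \<bullet> (\<theta> - thb k \<omega>);
          psi = real_cond_exp M (F k)
                  (\<lambda>\<omega>'. sgn (y (Suc k) \<omega>' - Sat (L k \<omega>') (l k \<omega>') (u k \<omega>') (U k \<omega>')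
                                              (\<phi> k \<omega>' \<bullet> thb k \<omega>'))) \<omega>
                + Fd (Suc k) \<omega> (u k \<omega> - a) * Ind (S a = U k \<omega>)
                - (1 - Fd (Suc k) \<omega> (l k \<omega> - a)) * Ind (S a = L k \<omega>)
      in betabar (fd (Suc k) \<omega>) (Ck k \<omega>) (l k \<omega>) (u k \<omega>) * \<bar>e\<bar> \<le> \<bar>psi\<bar> \<and> e * psi \<ge> 0)"
proof (intro allI, goal_cases)
  case (1 k)
  interpret cond_cdf M "F k" "\<epsilon> (Suc k)" "Fd (Suc k)"
    using measurable_from_subalg[OF subalg eps_meas]
    by (intro cond_cdfI[OF prob subalg _ Fd_meas Fd_cond Fd_mono Fd_bot Fd_top Fd_deriv])
  have [measurable]: "\<phi> k \<in> borel_measurable (F k)" "thb k \<in> borel_measurable (F k)"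
    by (rule phi_meas thb_meas)+
  have \<theta>_in_D: "\<theta> \<in> D" using theta_int interior_subset by blast
  then have "proj D Q v \<in> D" for Q v using proj_in[OF D_compact] by blast
  then have thb_in_D: "thb k \<omega> \<in> D" if "\<omega> \<in> space M" for \<omega>
    using that thb0 th0_D thb_rec by (cases k) auto
  have mean: "AE \<omega> in M. real_cond_exp M (F k) (\<lambda>\<omega>'. sgn (y (Suc k) \<omega>'
        - Sat (L k \<omega>') (l k \<omega>') (u k \<omega>') (U k \<omega>') (\<phi> k \<omega>' \<bullet> thb k \<omega>'))) \<omega>
      = sgn_Sat_mean (Fd (Suc k) \<omega>) (L k \<omega>) (l k \<omega>) (u k \<omega>) (U k \<omega>) (\<phi> k \<omega> \<bullet> thb k \<omega>) (\<phi> k \<omega> \<bullet> \<theta>)"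
    using order nondegen[of k] model L_meas l_meas u_meas U_meas
    by (intro cond_exp_sgn_Sat) (measurable, auto elim: eventually_mono)
  show ?case
    using mean order nondegen[of k] AE_space
  proof eventually_elim
    case (elim \<omega>)
    have "0 \<le> fd (Suc k) \<omega> z" for z
      using mono_has_real_derivative_nonneg[OF Fd_mono[OF elim(4)] Fd_deriv[OF elim(4)]] .
    then have "betabar (fd (Suc k) \<omega>) (Ck k \<omega>) (l k \<omega>) (u k \<omega>) \<le> fd (Suc k) \<omega> z"
      if "\<bar>z\<bar> \<le> max (2 * Ck k \<omega>) (max (Ck k \<omega> + l k \<omega>) (Ck k \<omega> - u k \<omega>))" for z
      using that by (rule betabar_le)
    moreover have "\<bar>\<phi> k \<omega> \<bullet> \<theta>\<bar> \<le> Ck k \<omega>" "\<bar>\<phi> k \<omega> \<bullet> thb k \<omega>\<bar> \<le> Ck k \<omega>"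
      using Ck_sup[OF elim(4)] \<theta>_in_D thb_in_D[OF elim(4)] by blast+
    ultimately show ?case
      unfolding Let_def inner_diff_right elim(1) using elim(2,3)
      by (intro sgn_Sat_mean_correction_bounds[OF _ _ _ _ Fd_deriv[OF elim(4)] Fd_mono[OF elim(4)]
          Fd_half[OF elim(4)]]) auto
  qed
qed

end
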